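(* Let $X$ be a compact Hausdorff space, $\mathcal F$ a left ultrafunctor from $X$ to $\mathsf{k\text{-}CompMet}$, and $E=\coprod_{x\in X}\mathcal F(x)$ with the topology $\tau$. A subset $C\subseteq E$, written $C=\coprod_{x\in X}U(x)$ with $U(x)=C\cap\mathcal F(x)$, is $\tau$-open if and only if: for every ultrafilter $\mu$ on $X$ converging to a point $x\in\pi(C)$ and every $g\in U(x)$, if $(b_y)_{y\in X}$ is a representative of $\sigma_\mu(g)\in\int_X\mathcal F(y)\,d\mu$, then there exist $W\in\mu$ and $\epsilon>0$ such that $B(b_y,\epsilon)\subseteq U(y)$ for all $y\in W$ (i.e. $\coprod_{y\in W}B(b_y,\epsilon)\subseteq C$). (The existence of such $W,\epsilon$ does not depend on the representative.)
   Context: Ultrafilter conventions: pushforward $g\mu=\{B:g^{-1}(B)\in\mu\}$; for compact Hausdorff $X$, $\int_Sx_sd\mu$ is the limit of the pushforward of $\mu$ along $s\mapsto x_s$; $\int_S\nu_sd\mu$ is the ultrafilter with $B\in\int_S\nu_sd\mu$ iff $\{s:B\in\nu_s\}\in\mu$. $\mathsf{k\text{-}CompMet}$: complete metric spaces with distances $\le k$, 1-Lipschitz maps; metric ultraproduct $\int_SM_sd\mu=\prod M_s/\{\lim_\mu d(a_s,b_s)=0\}$ with metric $\lim_\mu d(a_s,b_s)$. A left ultrafunctor $\mathcal F$ from $X$ to $\mathsf{k\text{-}CompMet}$ assigns objects $\mathcal F(x)$ and 1-Lipschitz maps $\sigma_\mu:\mathcal F(\int_Sx_sd\mu)\to\int_S\mathcal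 F(x_s)d\mu$ for all sets $S$, families $(x_s)$ in $X$ and ultrafilters $\mu$ on $S$, compatible with principal ultrafilters and with the Fubini maps $\Delta((b_t)_t)=((b_t)_t)_s$ (i.e. $\Delta\circ\sigma_{\int_S\nu_sd\mu}=(\int_S\sigma_{\nu_s}d\mu)\circ\sigma_\mu$). For an ultrafilter $\mu$ on $X$, $\sigma_\mu$ refers to the identity family on $X$. $\tau$ is the unique topology on $E$ in which an ultrafilter $\eta$ on $E$ converges to $f$ iff $\pi\eta$ converges to $\pi(f)$ and, for a representative $(b_x)$ of $\sigma_{\pi\eta}(f)$, $\coprod_xB(b_x,\epsilon)\in\eta$ for all $\epsilon>0$. $B(b,\epsilon)$ is the open metric ball in the fibre containing $b$. *)

theory Defs
  imports "HOL-Analysis.Analysis"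
begin

definition ultrafilter_on :: "'s set \<Rightarrow> 's set set \<Rightarrow> bool" where
  "ultrafilter_on S \<mu> \<longleftrightarrow> \<mu> \<subseteq> Pow S \<and> S \<in> \<mu> \<and> {} \<notin> \<mu> \<and>
     (\<forall>A B. A \<in> \<mu> \<longrightarrow> B \<in> \<mu> \<longrightarrow> A \<inter> B \<in> \<mu>) \<and>
     (\<forall>A B. A \<in> \<mu> \<longrightarrow> A \<subseteq> B \<longrightarrow> B \<subseteq> S \<longrightarrow> B \<in> \<mu>) \<and>
     (\<forall>A. A \<subseteq> S \<longrightarrow> A \<in> \<mu> \<or> S - A \<in> \<mu>)"

definition pushforward :: "'s set \<Rightarrow> ('s \<Rightarrow> 't) \<Rightarrow> 't set \<Rightarrow> 's set set \<Rightarrow> 't set set" where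
  "pushforward S g T \<mu> = {B. B \<subseteq> T \<and> {s\<in>S. g s \<in> B} \<in> \<mu>}"

definition principal_uf :: "'s set \<Rightarrow> 's \<Rightarrow> 's set set" where
  "principal_uf S s0 = {A. A \<subseteq> S \<and> s0 \<in> A}"

definition uf_integral :: "'s set \<Rightarrow> ('s \<Rightarrow> 't set set) \<Rightarrow> 's set set \<Rightarrow> 't set set" where
  "uf_integral S \<nu> \<mu> = {B. {s\<in>S. B \<in> \<nu> s} \<in> \<mu>}"

definition uconv :: "'x topology \<Rightarrow> 'x set set \<Rightarrow> 'x \<Rightarrow> bool" where
  "uconv X \<mu> x \<longleftrightarrow> x \<in> topspace X \<and> (\<forall>U. openin X U \<longrightarrow> x \<in> U \<longrightarrow> U \<in> \<mu>)"

text \<open>The point \<open>\<integral>_S x_s d\<mu>\<close>: the limit of the pushforward of mu along s |-> x_s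
  (unique for compact Hausdorff X).\<close>
definition pt_integral :: "'x topology \<Rightarrow> 's set \<Rightarrow> ('s \<Rightarrow> 'x) \<Rightarrow> 's set set \<Rightarrow> 'x" where
  "pt_integral X S xs \<mu> = (THE x. uconv X (pushforward S xs (topspace X) \<mu>) x)"

definition ulim_real :: "'s set \<Rightarrow> 's set set \<Rightarrow> ('s \<Rightarrow> real) \<Rightarrow> real" where
  "ulim_real S \<mu> r = (THE L. \<forall>e>0. {s\<in>S. \<bar>r s - L\<bar> < e} \<in> \<mu>)"

section \<open>Metric ultraproducts (elements are represented by families)\<close>

definition uprod_elem :: "'s set \<Rightarrow> ('s \<Rightarrow> 'a metric) \<Rightarrow> ('s \<Rightarrow> 'a) \<Rightarrow> bool" where
  "uprod_elem S M b \<longleftrightarrow> (\<forall>s\<in>S. b s \<in> mspace (M s))"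

definition uprod_dist :: "'s set \<Rightarrow> 's set set \<Rightarrow> ('s \<Rightarrow> 'a metric) \<Rightarrow> ('s \<Rightarrow> 'a) \<Rightarrow> ('s \<Rightarrow> 'a) \<Rightarrow> real" where
  "uprod_dist S \<mu> M a b = ulim_real S \<mu> (\<lambda>s. mdist (M s) (a s) (b s))"

text \<open>b is a representative of the class of c in \<open>\<integral>_S M_s d\<mu>\<close>.\<close>
definition is_rep :: "'s set \<Rightarrow> 's set set \<Rightarrow> ('s \<Rightarrow> 'a metric) \<Rightarrow> ('s \<Rightarrow> 'a) \<Rightarrow> ('s \<Rightarrow> 'a) \<Rightarrow> bool" where
  "is_rep S \<mu> M c b \<longleftrightarrow> uprod_elem S M b \<and> uprod_dist S \<mu> M b c = 0"

text \<open>sigma S xs mu a returns a representative family of \<open>\<sigma>_\<mu>(a)\<close>.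
  Index sets S, T range over subsets of the type 'i.\<close>
definition left_ultrafunctor ::
  "real \<Rightarrow> 'x topology \<Rightarrow> ('x \<Rightarrow> 'a metric) \<Rightarrow>
   ('i set \<Rightarrow> ('i \<Rightarrow> 'x) \<Rightarrow> 'i set set \<Rightarrow> 'a \<Rightarrow> 'i \<Rightarrow> 'a) \<Rightarrow> bool" where
  "left_ultrafunctor k X F \<sigma> \<longleftrightarrow>
    (\<forall>x\<in>topspace X. mcomplete_of (F x) \<and>
        (\<forall>a\<in>mspace (F x). \<forall>b\<in>mspace (F x). mdist (F x) a b \<le> k)) \<and>
    (\<forall>S xs \<mu>. xs ` S \<subseteq> topspace X \<longrightarrow> ultrafilter_on S \<mu> \<longrightarrow>
        (\<forall>a\<in>mspace (F (pt_integral X S xs \<mu>)).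
            uprod_elem S (\<lambda>s. F (xs s)) (\<sigma> S xs \<mu> a)) \<and>
        (\<forall>a\<in>mspace (F (pt_integral X S xs \<mu>)). \<forall>b\<in>mspace (F (pt_integral X S xs \<mu>)).
            uprod_dist S \<mu> (\<lambda>s. F (xs s)) (\<sigma> S xs \<mu> a) (\<sigma> S xs \<mu> b)
              \<le> mdist (F (pt_integral X S xs \<mu>)) a b)) \<and>
    (\<forall>S xs s0. xs ` S \<subseteq> topspace X \<longrightarrow> s0 \<in> S \<longrightarrow>
        (\<forall>a\<in>mspace (F (pt_integral X S xs (principal_uf S s0))).
            \<sigma> S xs (principal_uf S s0) a s0 = a)) \<and>
    (\<forall>S T xs \<nu> \<mu>. xs ` T \<subseteq> topspace X \<longrightarrow> (\<forall>s\<in>S. ultrafilter_on T (\<nu> s)) \<longrightarrow>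
        ultrafilter_on S \<mu> \<longrightarrow>
        (\<forall>a\<in>mspace (F (pt_integral X T xs (uf_integral S \<nu> \<mu>))).
           ulim_real S \<mu> (\<lambda>s. ulim_real T (\<nu> s) (\<lambda>t.
              mdist (F (xs t))
                (\<sigma> T xs (uf_integral S \<nu> \<mu>) a t)
                (\<sigma> T xs (\<nu> s)
                   (\<sigma> S (\<lambda>s'. pt_integral X T xs (\<nu> s')) \<mu> a s) t))) = 0))"

definition total_space :: "'x topology \<Rightarrow> ('x \<Rightarrow> 'a metric) \<Rightarrow> ('x \<times> 'a) set" where
  "total_space X F = Sigma (topspace X) (\<lambda>x. mspace (F x))"

definition is_tau ::
  "'x topology \<Rightarrow> ('x \<Rightarrow> 'a metric) \<Rightarrow>
   ('x set \<Rightarrow> ('x \<Rightarrow> 'x) \<Rightarrow> 'x set set \<Rightarrow> 'a \<Rightarrow> 'x \<Rightarrow> 'a) \<Rightarrow> ('x \<times> 'a) topology \<Rightarrow> bool" where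
  "is_tau X F \<sigma> \<tau> \<longleftrightarrow> topspace \<tau> = total_space X F \<and>
    (\<forall>\<eta> f. ultrafilter_on (total_space X F) \<eta> \<longrightarrow> f \<in> total_space X F \<longrightarrow>
       (uconv \<tau> \<eta> f \<longleftrightarrow>
          uconv X (pushforward (total_space X F) fst (topspace X) \<eta>) (fst f) \<and>
          (\<forall>\<epsilon>>0. Sigma (topspace X)
                    (\<lambda>x. mball_of (F x)
                          (\<sigma> (topspace X) id (pushforward (total_space X F) fst (topspace X) \<eta>)
                              (snd f) x) \<epsilon>) \<in> \<eta>)))"

end

theory Submission
  imports Defs
begin

text \<open>A set is open iff it belongs to every ultrafilter converging to one of its points.
  If \<open>C\<close> is open but no tube \<open>\<Coprod>_(y\<in>W) B(b_y, \<epsilon>)\<close> with \<open>W \<in> \<mu>\<close> around the representative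
  \<open>b\<close> of \<open>\<sigma>_\<mu>(g)\<close> lies in \<open>C\<close>, then the sets \<open>\<Coprod>_(y\<in>W) B(b_y, \<epsilon>) - C\<close> form a filter base.
  An ultrafilter \<open>\<eta>\<close> refining it projects to \<open>\<mu>\<close>, and since \<open>b\<close> and \<open>\<sigma>_\<mu>(g)\<close> are
  \<open>\<mu>\<close>-almost everywhere arbitrarily close, \<open>\<eta>\<close> also contains all tubes around \<open>\<sigma>_\<mu>(g)\<close>;
  so \<open>\<eta>\<close> converges to \<open>(x, g)\<close> and contains \<open>C\<close>, a contradiction. Conversely, if \<open>\<eta>\<close>
  converges to \<open>(x, g) \<in> C\<close>, the condition for \<open>\<mu> = \<pi>\<eta>\<close> and the representative \<open>\<sigma>_\<mu>(g)\<close>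
  itself yields a tube inside \<open>C\<close>, and that tube belongs to \<open>\<eta>\<close>.\<close>

section \<open>Ultrafilters\<close>

definition proper_filter_on :: "'s set \<Rightarrow> 's set set \<Rightarrow> bool" where
  "proper_filter_on S F \<longleftrightarrow> F \<subseteq> Pow S \<and> S \<in> F \<and> {} \<notin> F \<and>
     (\<forall>A B. A \<in> F \<longrightarrow> B \<in> F \<longrightarrow> A \<inter> B \<in> F) \<and>
     (\<forall>A B. A \<in> F \<longrightarrow> A \<subseteq> B \<longrightarrow> B \<subseteq> S \<longrightarrow> B \<in> F)"

lemma ultrafilter_on_iff:
  "ultrafilter_on S \<mu> \<longleftrightarrow> proper_filter_on S \<mu> \<and> (\<forall>A. A \<subseteq> S \<longrightarrow> A \<in> \<mu> \<or> S - A \<in> \<mu>)"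
  unfolding ultrafilter_on_def proper_filter_on_def by (simp only: conj_assoc)

lemma proper_filter_onI:
  assumes "\<And>A. A \<in> F \<Longrightarrow> A \<subseteq> S" "S \<in> F" "{} \<notin> F"
    and "\<And>A B. A \<in> F \<Longrightarrow> B \<in> F \<Longrightarrow> A \<inter> B \<in> F"
    and "\<And>A B. A \<in> F \<Longrightarrow> A \<subseteq> B \<Longrightarrow> B \<subseteq> S \<Longrightarrow> B \<in> F"
  shows "proper_filter_on S F"
  unfolding proper_filter_on_def using assms by blast

context
  fixes S :: "'s set" and F :: "'s set set"
  assumes F: "proper_filter_on S F"
begin

lemma proper_filter_on_subset: "A \<in> F \<Longrightarrow> A \<subseteq> S"
  using F by (auto simp: proper_filter_on_def)

lemma proper_filter_on_space: "S \<in> F"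
  using F by (simp add: proper_filter_on_def)

lemma proper_filter_on_empty: "{} \<notin> F"
  using F by (simp add: proper_filter_on_def)

lemma proper_filter_on_Int: "A \<in> F \<Longrightarrow> B \<in> F \<Longrightarrow> A \<inter> B \<in> F"
  using F by (simp add: proper_filter_on_def)

lemma proper_filter_on_mono: "A \<in> F \<Longrightarrow> A \<subseteq> B \<Longrightarrow> B \<subseteq> S \<Longrightarrow> B \<in> F"
  using F by (simp add: proper_filter_on_def)

lemma proper_filter_on_disjoint: "A \<in> F \<Longrightarrow> B \<in> F \<Longrightarrow> A \<inter> B \<noteq> {}"
  using proper_filter_on_Int proper_filter_on_empty by fastforce

end

lemmas ultrafilter_on_subset = proper_filter_on_subset[OF ultrafilter_on_iff[THEN iffD1, THEN conjunct1]]
lemmas ultrafilter_on_space = proper_filter_on_space[OF ultrafilter_on_iff[THEN iffD1, THEN conjunct1]]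
lemmas ultrafilter_on_Int = proper_filter_on_Int[OF ultrafilter_on_iff[THEN iffD1, THEN conjunct1]]
lemmas ultrafilter_on_mono = proper_filter_on_mono[OF ultrafilter_on_iff[THEN iffD1, THEN conjunct1]]
lemmas ultrafilter_on_disjoint = proper_filter_on_disjoint[OF ultrafilter_on_iff[THEN iffD1, THEN conjunct1]]

lemma ultrafilter_on_Diff:
  "ultrafilter_on S \<mu> \<Longrightarrow> A \<subseteq> S \<Longrightarrow> A \<notin> \<mu> \<Longrightarrow> S - A \<in> \<mu>"
  unfolding ultrafilter_on_def by blast

lemma ultrafilter_on_eqI:
  assumes \<mu>: "ultrafilter_on S \<mu>" and \<nu>: "ultrafilter_on S \<nu>" and "\<mu> \<subseteq> \<nu>"
  shows "\<mu> = \<nu>"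
proof
  show "\<nu> \<subseteq> \<mu>"
  proof
    fix A assume "A \<in> \<nu>"
    with \<nu> have "S - A \<notin> \<nu>"
      using ultrafilter_on_disjoint by blast
    with \<open>A \<in> \<nu>\<close> \<open>\<mu> \<subseteq> \<nu>\<close> show "A \<in> \<mu>"
      using ultrafilter_on_Diff[OF \<mu>] ultrafilter_on_subset[OF \<nu>] by blast
  qed
qed (fact \<open>\<mu> \<subseteq> \<nu>\<close>)

lemma proper_filter_on_upward_closure:
  assumes "B \<noteq> {}" and "\<And>b. b \<in> B \<Longrightarrow> b \<noteq> {} \<and> b \<subseteq> S"
    and "\<And>b1 b2. b1 \<in> B \<Longrightarrow> b2 \<in> B \<Longrightarrow> \<exists>b3\<in>B. b3 \<subseteq> b1 \<inter> b2"
  shows "proper_filter_on S {A. A \<subseteq> S \<and> (\<exists>b\<in>B. b \<subseteq> A)}" (is "proper_filter_on S ?F")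
proof (rule proper_filter_onI)
  show "S \<in> ?F"
    using assms(1,2) by blast
  show "{} \<notin> ?F"
    using assms(2) by blast
next
  fix A1 A2 assume "A1 \<in> ?F" "A2 \<in> ?F"
  then obtain b1 b2 where b: "b1 \<in> B" "b2 \<in> B" "b1 \<subseteq> A1" "b2 \<subseteq> A2" and "A1 \<subseteq> S"
    by blast
  obtain b3 where "b3 \<in> B" "b3 \<subseteq> b1 \<inter> b2"
    using assms(3)[OF b(1,2)] ..
  with b \<open>A1 \<subseteq> S\<close> show "A1 \<inter> A2 \<in> ?F"
    by blast
next
  fix A1 A2 assume "A1 \<in> ?F" "A1 \<subseteq> A2" "A2 \<subseteq> S"
  then show "A2 \<in> ?F"
    by blast
qed simp

lemma proper_filter_on_Union_chain:
  assumes "\<C> \<noteq> {}" and F: "\<And>G. G \<in> \<C> \<Longrightarrow> proper_filter_on S G" and "subset.chain \<A> \<C>"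
  shows "proper_filter_on S (\<Union>\<C>)"
proof (rule proper_filter_onI)
  show "S \<in> \<Union>\<C>"
    using assms(1) F proper_filter_on_space by blast
  show "{} \<notin> \<Union>\<C>"
    using F proper_filter_on_empty by blast
  show "A \<subseteq> S" if "A \<in> \<Union>\<C>" for A
    using that F proper_filter_on_subset by blast
  show "B \<in> \<Union>\<C>" if "A \<in> \<Union>\<C>" "A \<subseteq> B" "B \<subseteq> S" for A B
    using that F proper_filter_on_mono by (meson UnionE UnionI)
  fix A B assume "A \<in> \<Union>\<C>" "B \<in> \<Union>\<C>"
  then obtain G1 G2 where "G1 \<in> \<C>" "G2 \<in> \<C>" "A \<in> G1" "B \<in> G2"
    by blast
  moreover have "G1 \<subseteq> G2 \<or> G2 \<subseteq> G1"
    using assms(3) \<open>G1 \<in> \<C>\<close> \<open>G2 \<in> \<C>\<close> by (auto simp: subset_chain_def)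
  ultimately show "A \<inter> B \<in> \<Union>\<C>"
    using F proper_filter_on_Int by blast
qed

lemma maximal_proper_filter_on_imp_ultrafilter_on:
  assumes M: "proper_filter_on S M"
    and max: "\<And>G. proper_filter_on S G \<Longrightarrow> M \<subseteq> G \<Longrightarrow> G = M"
  shows "ultrafilter_on S M"
  unfolding ultrafilter_on_iff
proof (intro conjI allI impI M)
  fix A assume "A \<subseteq> S"
  show "A \<in> M \<or> S - A \<in> M"
  proof (cases "\<exists>m\<in>M. m \<inter> A = {}")
    case True
    then obtain m where "m \<in> M" "m \<inter> A = {}"
      by blast
    then have "m \<subseteq> S - A"
      using proper_filter_on_subset[OF M] by blast
    then show ?thesis
      using proper_filter_on_mono[OF M \<open>m \<in> M\<close>] by blast
  next
    case False
    \<comment> \<open>then \<open>M\<close> and \<open>A\<close> generate a proper filter, which by maximality is \<open>M\<close> itself\<close>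
    let ?B = "(\<lambda>m. m \<inter> A) ` M"
    let ?G = "{C. C \<subseteq> S \<and> (\<exists>b\<in>?B. b \<subseteq> C)}"
    have "proper_filter_on S ?G"
    proof (rule proper_filter_on_upward_closure)
      show "?B \<noteq> {}"
        using proper_filter_on_space[OF M] by blast
      show "b \<noteq> {} \<and> b \<subseteq> S" if "b \<in> ?B" for b
        using that False \<open>A \<subseteq> S\<close> by blast
      show "\<exists>b3\<in>?B. b3 \<subseteq> b1 \<inter> b2" if b: "b1 \<in> ?B" "b2 \<in> ?B" for b1 b2
      proof -
        obtain m1 m2 where "m1 \<in> M" "m2 \<in> M" "b1 = m1 \<inter> A" "b2 = m2 \<inter> A"
          using b by blast
        then have "m1 \<inter> m2 \<inter> A \<in> ?B" "m1 \<inter> m2 \<inter> A \<subseteq> b1 \<inter> b2"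
          using proper_filter_on_Int[OF M] by auto
        then show ?thesis ..
      qed
    qed
    moreover have "M \<subseteq> ?G"
    proof
      fix m assume "m \<in> M"
      then have "m \<inter> A \<in> ?B" "m \<subseteq> S"
        using proper_filter_on_subset[OF M] by auto
      then show "m \<in> ?G"
        by blast
    qed
    ultimately have "?G = M"
      by (rule max)
    moreover have "A \<in> ?G"
      using \<open>A \<subseteq> S\<close> proper_filter_on_space[OF M] by blast
    ultimately show ?thesis
      by blast
  qed
qed

lemma proper_filter_on_imp_ultrafilter_on:
  assumes "proper_filter_on S F"
  obtains U where "ultrafilter_on S U" and "F \<subseteq> U"
proof -
  let ?\<A> = "{G. proper_filter_on S G \<and> F \<subseteq> G}"
  have "\<exists>M\<in>?\<A>. \<forall>G\<in>?\<A>. M \<subseteq> G \<longrightarrow> G = M"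
  proof (rule subset_Zorn_nonempty)
    fix \<C> assume "\<C> \<noteq> {}" and ch: "subset.chain ?\<A> \<C>"
    have "proper_filter_on S (\<Union>\<C>)"
      using proper_filter_on_Union_chain[OF \<open>\<C> \<noteq> {}\<close> _ ch] ch by (auto simp: subset_chain_def)
    moreover have "F \<subseteq> \<Union>\<C>"
      using \<open>\<C> \<noteq> {}\<close> ch unfolding subset_chain_def by blast
    ultimately show "\<Union>\<C> \<in> ?\<A>"
      by blast
  qed (use assms in auto)
  then obtain M where M: "proper_filter_on S M" "F \<subseteq> M"
    and max: "\<forall>G\<in>?\<A>. M \<subseteq> G \<longrightarrow> G = M"
    by blast
  have "ultrafilter_on S M"
  proof (rule maximal_proper_filter_on_imp_ultrafilter_on[OF M(1)])
    show "G = M" if "proper_filter_on S G" "M \<subseteq> G" for G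
      using max that M(2) by blast
  qed
  then show thesis
    using M(2) by (rule that)
qed

lemma filter_base_imp_ultrafilter_on:
  assumes "B \<noteq> {}" and "\<And>b. b \<in> B \<Longrightarrow> b \<noteq> {} \<and> b \<subseteq> S"
    and "\<And>b1 b2. b1 \<in> B \<Longrightarrow> b2 \<in> B \<Longrightarrow> \<exists>b3\<in>B. b3 \<subseteq> b1 \<inter> b2"
  obtains U where "ultrafilter_on S U" and "B \<subseteq> U"
proof -
  obtain U where U: "ultrafilter_on S U" "{A. A \<subseteq> S \<and> (\<exists>b\<in>B. b \<subseteq> A)} \<subseteq> U"
    using proper_filter_on_imp_ultrafilter_on[OF proper_filter_on_upward_closure[OF assms]] .
  have "B \<subseteq> {A. A \<subseteq> S \<and> (\<exists>b\<in>B. b \<subseteq> A)}"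
    using assms(2) by blast
  with U show thesis
    using that by (meson subset_trans)
qed

lemma ultrafilter_on_convergent_to_boundary_point:
  assumes "f \<in> topspace T" and nbhd: "\<And>U. openin T U \<Longrightarrow> f \<in> U \<Longrightarrow> \<not> U \<subseteq> C"
  obtains \<eta> where "ultrafilter_on (topspace T) \<eta>" and "uconv T \<eta> f" and "topspace T - C \<in> \<eta>"
proof -
  let ?B = "(\<lambda>U. U - C) ` {U. openin T U \<and> f \<in> U}"
  have top: "topspace T - C \<in> ?B"
    using \<open>f \<in> topspace T\<close> by blast
  obtain \<eta> where \<eta>: "ultrafilter_on (topspace T) \<eta>" "?B \<subseteq> \<eta>"
  proof (rule filter_base_imp_ultrafilter_on)
    show "?B \<noteq> {}"
      using top by blast
    show "b \<noteq> {} \<and> b \<subseteq> topspace T" if "b \<in> ?B" for b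
      using that nbhd openin_subset by fastforce
    show "\<exists>b3\<in>?B. b3 \<subseteq> b1 \<inter> b2" if b: "b1 \<in> ?B" "b2 \<in> ?B" for b1 b2
    proof -
      obtain U1 U2 where "openin T U1" "f \<in> U1" "b1 = U1 - C" "openin T U2" "f \<in> U2" "b2 = U2 - C"
        using b by blast
      then have "U1 \<inter> U2 - C \<in> ?B" "U1 \<inter> U2 - C \<subseteq> b1 \<inter> b2"
        by auto
      then show ?thesis ..
    qed
  qed
  have "uconv T \<eta> f"
    unfolding uconv_def
  proof (intro conjI allI impI)
    fix U assume "openin T U" "f \<in> U"
    then have "U - C \<in> \<eta>"
      using \<eta>(2) by blast
    then show "U \<in> \<eta>"
      using ultrafilter_on_mono[OF \<eta>(1)] openin_subset[OF \<open>openin T U\<close>] by blast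
  qed (fact \<open>f \<in> topspace T\<close>)
  then show thesis
    using \<eta>(1) subsetD[OF \<eta>(2) top] that by blast
qed

lemma openin_iff_ultrafilter_on_convergent:
  assumes "C \<subseteq> topspace T"
  shows "openin T C \<longleftrightarrow>
    (\<forall>f\<in>C. \<forall>\<eta>. ultrafilter_on (topspace T) \<eta> \<longrightarrow> uconv T \<eta> f \<longrightarrow> C \<in> \<eta>)"
proof
  assume "openin T C"
  then show "\<forall>f\<in>C. \<forall>\<eta>. ultrafilter_on (topspace T) \<eta> \<longrightarrow> uconv T \<eta> f \<longrightarrow> C \<in> \<eta>"
    by (simp add: uconv_def)
next
  assume conv: "\<forall>f\<in>C. \<forall>\<eta>. ultrafilter_on (topspace T) \<eta> \<longrightarrow> uconv T \<eta> f \<longrightarrow> C \<in> \<eta>"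
  show "openin T C"
  proof (rule ccontr)
    assume "\<not> openin T C"
    then obtain f where "f \<in> C" and nbhd: "\<And>U. openin T U \<Longrightarrow> f \<in> U \<Longrightarrow> \<not> U \<subseteq> C"
      using openin_subopen[of T C] by blast
    have "f \<in> topspace T"
      using \<open>f \<in> C\<close> assms by blast
    then obtain \<eta> where \<eta>: "ultrafilter_on (topspace T) \<eta>" "uconv T \<eta> f" "topspace T - C \<in> \<eta>"
      using nbhd by (rule ultrafilter_on_convergent_to_boundary_point)
    then have "C \<in> \<eta>"
      using conv \<open>f \<in> C\<close> by blast
    then show False
      using ultrafilter_on_disjoint[OF \<eta>(1) _ \<eta>(3)] by blast
  qed
qed

section \<open>Pushforward, limits and ultralimits\<close>

lemma mem_pushforward: "B \<in> pushforward S g T \<mu> \<longleftrightarrow> B \<subseteq> T \<and> {s\<in>S. g s \<in> B} \<in> \<mu>"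
  by (simp add: pushforward_def)

lemma ultrafilter_on_pushforward:
  assumes \<mu>: "ultrafilter_on S \<mu>" and g: "g ` S \<subseteq> T"
  shows "ultrafilter_on T (pushforward S g T \<mu>)"
  unfolding ultrafilter_on_def
proof (intro conjI allI impI)
  let ?P = "pushforward S g T \<mu>"
  show "?P \<subseteq> Pow T"
    by (auto simp: mem_pushforward)
  have "{s\<in>S. g s \<in> T} = S"
    using g by blast
  then show "T \<in> ?P"
    using ultrafilter_on_space[OF \<mu>] by (simp add: mem_pushforward)
  show "{} \<notin> ?P"
    using ultrafilter_on_disjoint[OF \<mu>] by (fastforce simp: mem_pushforward)
  fix A B
  show "A \<inter> B \<in> ?P" if "A \<in> ?P" "B \<in> ?P"
  proof -
    have "{s\<in>S. g s \<in> A \<inter> B} = {s\<in>S. g s \<in> A} \<inter> {s\<in>S. g s \<in> B}"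
      by blast
    then show ?thesis
      using that ultrafilter_on_Int[OF \<mu>] by (auto simp: mem_pushforward)
  qed
  show "B \<in> ?P" if "A \<in> ?P" "A \<subseteq> B" "B \<subseteq> T"
  proof -
    have "{s\<in>S. g s \<in> A} \<subseteq> {s\<in>S. g s \<in> B}"
      using \<open>A \<subseteq> B\<close> by blast
    then show ?thesis
      using that ultrafilter_on_mono[OF \<mu>] by (auto simp: mem_pushforward)
  qed
next
  fix A assume "A \<subseteq> T"
  have "{s\<in>S. g s \<in> T - A} = S - {s\<in>S. g s \<in> A}"
    using g by blast
  then show "A \<in> pushforward S g T \<mu> \<or> T - A \<in> pushforward S g T \<mu>"
    using \<open>A \<subseteq> T\<close> ultrafilter_on_Diff[OF \<mu>, of "{s\<in>S. g s \<in> A}"] by (auto simp: mem_pushforward)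
qed

lemma pushforward_id:
  assumes "ultrafilter_on S \<mu>"
  shows "pushforward S id S \<mu> = \<mu>"
proof (rule set_eqI)
  fix B
  show "B \<in> pushforward S id S \<mu> \<longleftrightarrow> B \<in> \<mu>"
  proof (cases "B \<subseteq> S")
    case True
    then have "{s\<in>S. id s \<in> B} = B"
      by auto
    with True show ?thesis
      by (simp add: mem_pushforward)
  next
    case False
    then show ?thesis
      using ultrafilter_on_subset[OF assms] by (auto simp: mem_pushforward)
  qed
qed

lemma uconv_unique:
  assumes "Hausdorff_space X" "ultrafilter_on S \<mu>" "uconv X \<mu> x" "uconv X \<mu> y"
  shows "x = y"
proof (rule ccontr)
  assume "x \<noteq> y"
  moreover have "x \<in> topspace X" "y \<in> topspace X"
    using assms(3,4) by (auto simp: uconv_def)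
  ultimately obtain U V where "openin X U" "openin X V" "x \<in> U" "y \<in> V" "disjnt U V"
    using assms(1) unfolding Hausdorff_space_def by metis
  then have "U \<in> \<mu>" "V \<in> \<mu>"
    using assms(3,4) by (auto simp: uconv_def)
  with \<open>disjnt U V\<close> show False
    using ultrafilter_on_disjoint[OF assms(2)] by (auto simp: disjnt_def)
qed

lemma pt_integral_id:
  assumes "Hausdorff_space X" "ultrafilter_on (topspace X) \<mu>" "uconv X \<mu> x"
  shows "pt_integral X (topspace X) id \<mu> = x"
  unfolding pt_integral_def pushforward_id[OF assms(2)]
  using uconv_unique[OF assms(1,2)] assms(3) by blast

lemma ulim_real_eqI:
  assumes \<mu>: "ultrafilter_on S \<mu>" and L: "\<forall>e>0. {s\<in>S. \<bar>r s - L\<bar> < e} \<in> \<mu>"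
  shows "ulim_real S \<mu> r = L"
  unfolding ulim_real_def
proof (rule the_equality)
  fix L' assume L': "\<forall>e>0. {s\<in>S. \<bar>r s - L'\<bar> < e} \<in> \<mu>"
  show "L' = L"
  proof (rule ccontr)
    assume "L' \<noteq> L"
    then have "\<bar>L' - L\<bar> / 2 > 0"
      by simp
    then obtain s where "\<bar>r s - L'\<bar> < \<bar>L' - L\<bar> / 2" "\<bar>r s - L\<bar> < \<bar>L' - L\<bar> / 2"
      using ultrafilter_on_disjoint[OF \<mu>] L L' by blast
    then show False
      by (smt (verit) field_sum_of_halves)
  qed
qed (use L in auto)

lemma ultrafilter_on_le_or_less:
  fixes r :: "'s \<Rightarrow> 'b::linorder"
  assumes "ultrafilter_on S \<mu>"
  shows "{s\<in>S. t \<le> r s} \<in> \<mu> \<or> {s\<in>S. r s < t} \<in> \<mu>"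
proof -
  have "S - {s\<in>S. t \<le> r s} = {s\<in>S. r s < t}"
    by (auto simp: not_le)
  then show ?thesis
    using ultrafilter_on_Diff[OF assms, of "{s\<in>S. t \<le> r s}"] by auto
qed

lemma ulim_real_exists:
  fixes r :: "'s \<Rightarrow> real"
  assumes \<mu>: "ultrafilter_on S \<mu>" and bounded: "\<And>s. s \<in> S \<Longrightarrow> \<bar>r s\<bar> \<le> k"
  obtains L where "\<forall>e>0. {s\<in>S. \<bar>r s - L\<bar> < e} \<in> \<mu>"
proof -
  \<comment> \<open>the limit is the supremum of the lower bounds that hold \<open>\<mu>\<close>-almost everywhere\<close>
  define A where "A = {t. {s\<in>S. t \<le> r s} \<in> \<mu>}"
  have "- k \<le> r s" if "s \<in> S" for s
    using bounded[OF that] by linarith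
  then have "{s\<in>S. - k \<le> r s} = S"
    by blast
  then have "- k \<in> A"
    using ultrafilter_on_space[OF \<mu>] by (simp add: A_def)
  then have "A \<noteq> {}"
    by blast
  have "t \<le> k" if "t \<in> A" for t
  proof (rule ccontr)
    assume "\<not> t \<le> k"
    then have "\<not> t \<le> r s" if "s \<in> S" for s
      using bounded[OF that] by linarith
    then have "{s\<in>S. t \<le> r s} = {}"
      by blast
    moreover have mem: "{s\<in>S. t \<le> r s} \<in> \<mu>"
      using \<open>t \<in> A\<close> by (simp add: A_def)
    ultimately show False
      using ultrafilter_on_disjoint[OF \<mu> mem mem] by simp
  qed
  then have bdd: "bdd_above A"
    by (auto simp: bdd_above_def)
  have "{s\<in>S. \<bar>r s - Sup A\<bar> < e} \<in> \<mu>" if "e > 0" for e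
  proof -
    have "Sup A - e < Sup A"
      using \<open>e > 0\<close> by simp
    then obtain t where "t \<in> A" "Sup A - e < t"
      using less_cSup_iff[OF \<open>A \<noteq> {}\<close> bdd] by blast
    then have lower: "{s\<in>S. t \<le> r s} \<in> \<mu>"
      by (simp add: A_def)
    have "\<not> Sup A + e \<le> Sup A"
      using \<open>e > 0\<close> by simp
    then have "Sup A + e \<notin> A"
      using cSup_upper[OF _ bdd] by blast
    then have upper: "{s\<in>S. r s < Sup A + e} \<in> \<mu>"
      using ultrafilter_on_le_or_less[OF \<mu>, where t = "Sup A + e" and r = r] by (simp add: A_def)
    have "{s\<in>S. t \<le> r s} \<inter> {s\<in>S. r s < Sup A + e} \<subseteq> {s\<in>S. \<bar>r s - Sup A\<bar> < e}"
      using \<open>Sup A - e < t\<close> by auto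
    then show ?thesis
      using ultrafilter_on_mono[OF \<mu> ultrafilter_on_Int[OF \<mu> lower upper]] by blast
  qed
  then have "\<forall>e>0. {s\<in>S. \<bar>r s - Sup A\<bar> < e} \<in> \<mu>"
    by blast
  then show thesis
    by (rule that)
qed

lemma ulim_real_eq_0_iff:
  fixes r :: "'s \<Rightarrow> real"
  assumes \<mu>: "ultrafilter_on S \<mu>" and bounded: "\<And>s. s \<in> S \<Longrightarrow> 0 \<le> r s \<and> r s \<le> k"
  shows "ulim_real S \<mu> r = 0 \<longleftrightarrow> (\<forall>e>0. {s\<in>S. r s < e} \<in> \<mu>)"
proof -
  have abs_eq: "{s\<in>S. \<bar>r s - 0\<bar> < e} = {s\<in>S. r s < e}" for e
    using bounded by auto
  have "\<bar>r s\<bar> \<le> k" if "s \<in> S" for s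
    using bounded[OF that] by simp
  then obtain L where L: "\<forall>e>0. {s\<in>S. \<bar>r s - L\<bar> < e} \<in> \<mu>"
    using ulim_real_exists[of S \<mu> r k, OF \<mu>] by blast
  show ?thesis
  proof
    assume "ulim_real S \<mu> r = 0"
    then have "L = 0"
      using ulim_real_eqI[OF \<mu> L] by simp
    with L show "\<forall>e>0. {s\<in>S. r s < e} \<in> \<mu>"
      using abs_eq by simp
  next
    assume "\<forall>e>0. {s\<in>S. r s < e} \<in> \<mu>"
    then show "ulim_real S \<mu> r = 0"
      using abs_eq by (intro ulim_real_eqI[OF \<mu>]) simp
  qed
qed

section \<open>Representatives and tubes\<close>

lemma left_ultrafunctor_mdist_le:
  assumes "left_ultrafunctor k X F \<sigma>" and "x \<in> topspace X"
    and "a \<in> mspace (F x)" and "b \<in> mspace (F x)"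
  shows "mdist (F x) a b \<le> k"
proof -
  have "\<forall>x\<in>topspace X. mcomplete_of (F x) \<and>
      (\<forall>a\<in>mspace (F x). \<forall>b\<in>mspace (F x). mdist (F x) a b \<le> k)"
    using assms(1) unfolding left_ultrafunctor_def by (elim conjE)
  then show ?thesis
    using assms(2-4) by blast
qed

lemma left_ultrafunctor_sigma_id:
  assumes "left_ultrafunctor k X F \<sigma>" and "Hausdorff_space X"
    and \<mu>: "ultrafilter_on (topspace X) \<mu>" and "uconv X \<mu> x" and "g \<in> mspace (F x)"
  shows "uprod_elem (topspace X) F (\<sigma> (topspace X) id \<mu> g)"
proof -
  have "\<forall>S xs \<mu>. xs ` S \<subseteq> topspace X \<longrightarrow> ultrafilter_on S \<mu> \<longrightarrow>
      (\<forall>a\<in>mspace (F (pt_integral X S xs \<mu>)). uprod_elem S (\<lambda>s. F (xs s)) (\<sigma> S xs \<mu> a)) \<and>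
      (\<forall>a\<in>mspace (F (pt_integral X S xs \<mu>)). \<forall>b\<in>mspace (F (pt_integral X S xs \<mu>)).
          uprod_dist S \<mu> (\<lambda>s. F (xs s)) (\<sigma> S xs \<mu> a) (\<sigma> S xs \<mu> b)
            \<le> mdist (F (pt_integral X S xs \<mu>)) a b)"
    using assms(1) unfolding left_ultrafunctor_def by (elim conjE)
  from this[rule_format, where S = "topspace X" and xs = id] \<mu>
  have "\<forall>a\<in>mspace (F (pt_integral X (topspace X) id \<mu>)).
      uprod_elem (topspace X) (\<lambda>s. F (id s)) (\<sigma> (topspace X) id \<mu> a)"
    by simp
  moreover have "pt_integral X (topspace X) id \<mu> = x"
    using pt_integral_id[OF assms(2,3,4)] .
  ultimately show ?thesis
    using assms(5) by simp
qed

lemma is_rep_refl: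
  assumes "ultrafilter_on S \<mu>" and "uprod_elem S M b"
  shows "is_rep S \<mu> M b b"
proof -
  have "mdist (M s) (b s) (b s) = 0" if "s \<in> S" for s
    using assms(2) that by (simp add: uprod_elem_def)
  then have "{s\<in>S. \<bar>mdist (M s) (b s) (b s) - 0\<bar> < e} = S" if "e > 0" for e
    using that by auto
  then have "ulim_real S \<mu> (\<lambda>s. mdist (M s) (b s) (b s)) = 0"
    using ultrafilter_on_space[OF assms(1)] by (intro ulim_real_eqI[OF assms(1)]) simp
  with assms(2) show ?thesis
    by (simp add: is_rep_def uprod_dist_def)
qed

lemma is_rep_imp_eventually_close:
  assumes \<mu>: "ultrafilter_on S \<mu>"
    and bounded: "\<And>s a a'. s \<in> S \<Longrightarrow> a \<in> mspace (M s) \<Longrightarrow> a' \<in> mspace (M s) \<Longrightarrow> mdist (M s) a a' \<le> k"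
    and "uprod_elem S M c" and "is_rep S \<mu> M c b" and "e > 0"
  shows "{s\<in>S. mdist (M s) (b s) (c s) < e} \<in> \<mu>"
proof -
  have "uprod_elem S M b" and lim: "ulim_real S \<mu> (\<lambda>s. mdist (M s) (b s) (c s)) = 0"
    using assms(4) by (simp_all add: is_rep_def uprod_dist_def)
  have "0 \<le> mdist (M s) (b s) (c s) \<and> mdist (M s) (b s) (c s) \<le> k" if "s \<in> S" for s
    using bounded[OF that] assms(3) \<open>uprod_elem S M b\<close> that by (simp add: uprod_elem_def)
  with lim show ?thesis
    using ulim_real_eq_0_iff[of S \<mu> "\<lambda>s. mdist (M s) (b s) (c s)" k, OF \<mu>] \<open>e > 0\<close> by simp
qed

definition tube :: "('x \<Rightarrow> 'a metric) \<Rightarrow> 'x set \<Rightarrow> ('x \<Rightarrow> 'a) \<Rightarrow> real \<Rightarrow> ('x \<times> 'a) set" where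
  "tube F W b \<epsilon> = Sigma W (\<lambda>y. mball_of (F y) (b y) \<epsilon>)"

lemma tube_subset_iff:
  "tube F W b \<epsilon> \<subseteq> C \<longleftrightarrow> (\<forall>y\<in>W. mball_of (F y) (b y) \<epsilon> \<subseteq> {a. (y, a) \<in> C})"
  by (auto simp: tube_def)

lemma tube_subset_total_space: "W \<subseteq> topspace X \<Longrightarrow> tube F W b \<epsilon> \<subseteq> total_space X F"
  by (auto simp: tube_def total_space_def)

lemma mball_of_mono: "\<epsilon> \<le> \<epsilon>' \<Longrightarrow> mball_of m a \<epsilon> \<subseteq> mball_of m a \<epsilon>'"
  unfolding mball_of_def by (rule Metric_space.mball_subset_concentric[OF Metric_space_mspace_mdist])

lemma tube_mono: "W \<subseteq> W' \<Longrightarrow> \<epsilon> \<le> \<epsilon>' \<Longrightarrow> tube F W b \<epsilon> \<subseteq> tube F W' b \<epsilon>'"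
  unfolding tube_def by (intro Sigma_mono mball_of_mono)

lemma tube_subset_tube:
  assumes "\<And>y. y \<in> W \<Longrightarrow> c y \<in> mspace (F y) \<and> mdist (F y) (c y) (b y) + \<epsilon> \<le> \<epsilon>'"
  shows "tube F W b \<epsilon> \<subseteq> tube F W c \<epsilon>'"
proof
  fix p assume "p \<in> tube F W b \<epsilon>"
  then obtain y a where p: "p = (y, a)" "y \<in> W" and "b y \<in> mspace (F y)" "a \<in> mspace (F y)"
    and "mdist (F y) (b y) a < \<epsilon>"
    by (auto simp: tube_def)
  moreover have "mdist (F y) (c y) a \<le> mdist (F y) (c y) (b y) + mdist (F y) (b y) a"
    by (rule mdist_triangle) (use assms[OF \<open>y \<in> W\<close>] \<open>b y \<in> mspace (F y)\<close> \<open>a \<in> mspace (F y)\<close> in auto)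
  ultimately show "p \<in> tube F W c \<epsilon>'"
    using assms[OF \<open>y \<in> W\<close>] by (auto simp: tube_def)
qed

section \<open>The topology \<open>\<tau>\<close>\<close>

text \<open>The ultrafilter \<open>\<pi>\<eta>\<close> on \<open>X\<close>, where \<open>\<pi> = fst\<close> is the projection of the total space.\<close>

abbreviation base_ultrafilter ::
  "'x topology \<Rightarrow> ('x \<Rightarrow> 'a metric) \<Rightarrow> ('x \<times> 'a) set set \<Rightarrow> 'x set set" where
  "base_ultrafilter X F \<eta> \<equiv> pushforward (total_space X F) fst (topspace X) \<eta>"

lemma ultrafilter_on_base_ultrafilter:
  "ultrafilter_on (total_space X F) \<eta> \<Longrightarrow> ultrafilter_on (topspace X) (base_ultrafilter X F \<eta>)"
  by (rule ultrafilter_on_pushforward) (auto simp: total_space_def)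

lemma mem_base_ultrafilter:
  "W \<in> base_ultrafilter X F \<eta> \<longleftrightarrow> W \<subseteq> topspace X \<and> total_space X F \<inter> fst -` W \<in> \<eta>"
  by (simp add: mem_pushforward Int_def vimage_def)

lemma is_tau_uconv_iff:
  assumes "is_tau X F \<sigma> \<tau>" and "ultrafilter_on (total_space X F) \<eta>" and "f \<in> total_space X F"
  shows "uconv \<tau> \<eta> f \<longleftrightarrow> uconv X (base_ultrafilter X F \<eta>) (fst f) \<and>
    (\<forall>\<epsilon>>0. tube F (topspace X) (\<sigma> (topspace X) id (base_ultrafilter X F \<eta>) (snd f)) \<epsilon> \<in> \<eta>)"
proof -
  have "\<forall>\<eta> f. ultrafilter_on (total_space X F) \<eta> \<longrightarrow> f \<in> total_space X F \<longrightarrow>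
       (uconv \<tau> \<eta> f \<longleftrightarrow> uconv X (base_ultrafilter X F \<eta>) (fst f) \<and>
          (\<forall>\<epsilon>>0. tube F (topspace X) (\<sigma> (topspace X) id (base_ultrafilter X F \<eta>) (snd f)) \<epsilon> \<in> \<eta>))"
    using assms(1) unfolding is_tau_def tube_def by (elim conjE)
  from this[rule_format, OF assms(2,3)] show ?thesis .
qed

lemma base_ultrafilter_eqI:
  assumes \<mu>: "ultrafilter_on (topspace X) \<mu>" and \<eta>: "ultrafilter_on (total_space X F) \<eta>"
    and tubes: "\<And>W. W \<in> \<mu> \<Longrightarrow> tube F W b \<epsilon> \<in> \<eta>"
  shows "base_ultrafilter X F \<eta> = \<mu>"
proof -
  have "\<mu> \<subseteq> base_ultrafilter X F \<eta>"
  proof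
    fix W assume "W \<in> \<mu>"
    then have "W \<subseteq> topspace X"
      by (rule ultrafilter_on_subset[OF \<mu>])
    then have "tube F W b \<epsilon> \<subseteq> total_space X F \<inter> fst -` W"
      using tube_subset_total_space[of W X F b \<epsilon>] by (auto simp: tube_def)
    then have "total_space X F \<inter> fst -` W \<in> \<eta>"
      using ultrafilter_on_mono[OF \<eta> tubes[OF \<open>W \<in> \<mu>\<close>]] by simp
    with \<open>W \<subseteq> topspace X\<close> show "W \<in> base_ultrafilter X F \<eta>"
      by (simp add: mem_base_ultrafilter)
  qed
  then show ?thesis
    using ultrafilter_on_eqI[OF \<mu> ultrafilter_on_base_ultrafilter[OF \<eta>]] by simp
qed

text \<open>Convergence in \<open>\<tau>\<close> may be tested on tubes around any representative of \<open>\<sigma>\<^sub>\<mu>(g)\<close>,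
  not only around the one chosen by \<open>\<sigma>\<close>.\<close>

lemma uconv_tau_if_tubes_in:
  assumes "Hausdorff_space X" and \<sigma>: "left_ultrafunctor k X F \<sigma>" and \<tau>: "is_tau X F \<sigma> \<tau>"
    and \<mu>: "ultrafilter_on (topspace X) \<mu>" and "uconv X \<mu> x" and g: "g \<in> mspace (F x)"
    and rep: "is_rep (topspace X) \<mu> F (\<sigma> (topspace X) id \<mu> g) b"
    and \<eta>: "ultrafilter_on (total_space X F) \<eta>"
    and tubes: "\<And>W \<epsilon>. W \<in> \<mu> \<Longrightarrow> \<epsilon> > 0 \<Longrightarrow> tube F W b \<epsilon> \<in> \<eta>"
  shows "uconv \<tau> \<eta> (x, g)"
proof -
  let ?c = "\<sigma> (topspace X) id \<mu> g"
  have base: "base_ultrafilter X F \<eta> = \<mu>"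
    using \<mu> \<eta> tubes[OF _ zero_less_one] by (rule base_ultrafilter_eqI)
  have c: "uprod_elem (topspace X) F ?c"
    using left_ultrafunctor_sigma_id[OF \<sigma> assms(1) \<mu> \<open>uconv X \<mu> x\<close> g] .
  have b: "uprod_elem (topspace X) F b"
    using rep by (simp add: is_rep_def)
  have "tube F (topspace X) ?c \<epsilon> \<in> \<eta>" if "\<epsilon> > 0" for \<epsilon>
  proof -
    let ?W = "{y\<in>topspace X. mdist (F y) (b y) (?c y) < \<epsilon> / 2}"
    have "\<epsilon> / 2 > 0"
      using \<open>\<epsilon> > 0\<close> by linarith
    then have "?W \<in> \<mu>"
      using is_rep_imp_eventually_close[OF \<mu> _ c rep] left_ultrafunctor_mdist_le[OF \<sigma>] by blast
    then have "tube F ?W b (\<epsilon> / 2) \<in> \<eta>"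
      using \<open>\<epsilon> / 2 > 0\<close> by (rule tubes)
    moreover have "tube F ?W b (\<epsilon> / 2) \<subseteq> tube F ?W ?c \<epsilon>"
      using b c by (intro tube_subset_tube) (auto simp: uprod_elem_def mdist_commute)
    moreover have "tube F ?W ?c \<epsilon> \<subseteq> tube F (topspace X) ?c \<epsilon>"
      by (rule tube_mono) auto
    ultimately show ?thesis
      using ultrafilter_on_mono[OF \<eta>] tube_subset_total_space[of "topspace X" X F ?c \<epsilon>]
      by (meson order_refl subset_trans)
  qed
  moreover have "(x, g) \<in> total_space X F"
    using g \<open>uconv X \<mu> x\<close> by (simp add: total_space_def uconv_def)
  ultimately show ?thesis
    using is_tau_uconv_iff[OF \<tau> \<eta>] \<open>uconv X \<mu> x\<close> by (simp add: base)
qed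

lemma ultrafilter_on_tubes_Diff:
  assumes \<mu>: "ultrafilter_on (topspace X) \<mu>"
    and escape: "\<And>W \<epsilon>. W \<in> \<mu> \<Longrightarrow> \<epsilon> > 0 \<Longrightarrow> \<not> tube F W b \<epsilon> \<subseteq> C"
  shows "\<exists>\<eta>. ultrafilter_on (total_space X F) \<eta> \<and> (\<forall>W\<in>\<mu>. \<forall>\<epsilon>>0. tube F W b \<epsilon> - C \<in> \<eta>)"
proof -
  let ?B = "{tube F W b \<epsilon> - C | W \<epsilon>. W \<in> \<mu> \<and> \<epsilon> > 0}"
  obtain \<eta> where \<eta>: "ultrafilter_on (total_space X F) \<eta>" "?B \<subseteq> \<eta>"
  proof (rule filter_base_imp_ultrafilter_on)
    have "tube F (topspace X) b 1 - C \<in> ?B"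
      using ultrafilter_on_space[OF \<mu>] zero_less_one by blast
    then show "?B \<noteq> {}"
      by blast
    show "D \<noteq> {} \<and> D \<subseteq> total_space X F" if "D \<in> ?B" for D
    proof -
      obtain W \<epsilon> where "W \<in> \<mu>" "\<epsilon> > 0" "D = tube F W b \<epsilon> - C"
        using \<open>D \<in> ?B\<close> by blast
      moreover have "tube F W b \<epsilon> \<subseteq> total_space X F"
        by (rule tube_subset_total_space[OF ultrafilter_on_subset[OF \<mu> \<open>W \<in> \<mu>\<close>]])
      ultimately show ?thesis
        using escape[of W \<epsilon>] by blast
    qed
    show "\<exists>D3\<in>?B. D3 \<subseteq> D1 \<inter> D2" if "D1 \<in> ?B" "D2 \<in> ?B" for D1 D2
    proof -
      obtain W1 \<epsilon>1 W2 \<epsilon>2 where "W1 \<in> \<mu>" "\<epsilon>1 > 0" "D1 = tube F W1 b \<epsilon>1 - C"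
        and "W2 \<in> \<mu>" "\<epsilon>2 > 0" "D2 = tube F W2 b \<epsilon>2 - C"
        using \<open>D1 \<in> ?B\<close> \<open>D2 \<in> ?B\<close> by blast
      have "W1 \<inter> W2 \<in> \<mu>" and "min \<epsilon>1 \<epsilon>2 > 0"
        using ultrafilter_on_Int[OF \<mu> \<open>W1 \<in> \<mu>\<close> \<open>W2 \<in> \<mu>\<close>] \<open>\<epsilon>1 > 0\<close> \<open>\<epsilon>2 > 0\<close> by simp_all
      then have mem: "tube F (W1 \<inter> W2) b (min \<epsilon>1 \<epsilon>2) - C \<in> ?B"
        by blast
      have "tube F (W1 \<inter> W2) b (min \<epsilon>1 \<epsilon>2) \<subseteq> tube F W1 b \<epsilon>1 \<inter> tube F W2 b \<epsilon>2"
        by (intro Int_greatest tube_mono) simp_all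
      then have "tube F (W1 \<inter> W2) b (min \<epsilon>1 \<epsilon>2) - C \<subseteq> D1 \<inter> D2"
        using \<open>D1 = _\<close> \<open>D2 = _\<close> by blast
      with mem show ?thesis ..
    qed
  qed
  show ?thesis
  proof (intro exI conjI ballI allI impI)
    fix W and \<epsilon> :: real assume "W \<in> \<mu>" "\<epsilon> > 0"
    then have "tube F W b \<epsilon> - C \<in> ?B"
      by blast
    then show "tube F W b \<epsilon> - C \<in> \<eta>"
      by (rule subsetD[OF \<eta>(2)])
  qed (fact \<eta>(1))
qed

lemma openin_tau_if_tubes:
  assumes "Hausdorff_space X" and \<sigma>: "left_ultrafunctor k X F \<sigma>" and \<tau>: "is_tau X F \<sigma> \<tau>"
    and C: "C \<subseteq> total_space X F"
    and tubes: "\<And>\<mu> x g. ultrafilter_on (topspace X) \<mu> \<Longrightarrow> uconv X \<mu> x \<Longrightarrow> (x, g) \<in> C \<Longrightarrow>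
      \<exists>W\<in>\<mu>. \<exists>\<epsilon>>0. tube F W (\<sigma> (topspace X) id \<mu> g) \<epsilon> \<subseteq> C"
  shows "openin \<tau> C"
proof -
  have E: "topspace \<tau> = total_space X F"
    using \<tau> by (simp add: is_tau_def)
  show ?thesis
    unfolding openin_iff_ultrafilter_on_convergent[OF C[folded E]] E
  proof (intro ballI allI impI)
    fix f \<eta> assume "f \<in> C" and \<eta>: "ultrafilter_on (total_space X F) \<eta>" and "uconv \<tau> \<eta> f"
    obtain x g where f: "f = (x, g)"
      by fastforce
    let ?\<mu> = "base_ultrafilter X F \<eta>"
    let ?c = "\<sigma> (topspace X) id ?\<mu> g"
    have "f \<in> total_space X F"
      using \<open>f \<in> C\<close> C by blast
    then have "uconv X ?\<mu> x" and near: "\<forall>\<epsilon>>0. tube F (topspace X) ?c \<epsilon> \<in> \<eta>"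
      using is_tau_uconv_iff[OF \<tau> \<eta>] \<open>uconv \<tau> \<eta> f\<close> by (simp_all add: f)
    then obtain W \<epsilon> where "W \<in> ?\<mu>" "\<epsilon> > 0" and sub: "tube F W ?c \<epsilon> \<subseteq> C"
      using tubes[OF ultrafilter_on_base_ultrafilter[OF \<eta>] \<open>uconv X ?\<mu> x\<close>] \<open>f \<in> C\<close> f by blast
    then have "total_space X F \<inter> fst -` W \<in> \<eta>"
      by (simp add: mem_base_ultrafilter)
    then have "tube F (topspace X) ?c \<epsilon> \<inter> (total_space X F \<inter> fst -` W) \<in> \<eta>"
      using near \<open>\<epsilon> > 0\<close> ultrafilter_on_Int[OF \<eta>] by blast
    moreover have "tube F (topspace X) ?c \<epsilon> \<inter> (total_space X F \<inter> fst -` W) \<subseteq> C"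
      using sub by (auto simp: tube_def)
    ultimately show "C \<in> \<eta>"
      using ultrafilter_on_mono[OF \<eta> _ _ C] by blast
  qed
qed

lemma openin_tau_imp_tubes:
  assumes "Hausdorff_space X" and \<sigma>: "left_ultrafunctor k X F \<sigma>" and \<tau>: "is_tau X F \<sigma> \<tau>"
    and "openin \<tau> C" and \<mu>: "ultrafilter_on (topspace X) \<mu>" and "uconv X \<mu> x" and "(x, g) \<in> C"
    and rep: "is_rep (topspace X) \<mu> F (\<sigma> (topspace X) id \<mu> g) b"
  shows "\<exists>W\<in>\<mu>. \<exists>\<epsilon>>0. tube F W b \<epsilon> \<subseteq> C"
proof (rule ccontr)
  assume "\<not> (\<exists>W\<in>\<mu>. \<exists>\<epsilon>>0. tube F W b \<epsilon> \<subseteq> C)"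
  then have "\<And>W \<epsilon>. W \<in> \<mu> \<Longrightarrow> \<epsilon> > 0 \<Longrightarrow> \<not> tube F W b \<epsilon> \<subseteq> C"
    by blast
  then obtain \<eta> where \<eta>: "ultrafilter_on (total_space X F) \<eta>"
    and escape: "\<forall>W\<in>\<mu>. \<forall>\<epsilon>>0. tube F W b \<epsilon> - C \<in> \<eta>"
    using ultrafilter_on_tubes_Diff[OF \<mu>] by blast
  have "g \<in> mspace (F x)"
    using openin_subset[OF \<open>openin \<tau> C\<close>] \<open>(x, g) \<in> C\<close> \<tau> by (auto simp: is_tau_def total_space_def)
  have "uconv \<tau> \<eta> (x, g)"
    using assms(1) \<sigma> \<tau> \<mu> \<open>uconv X \<mu> x\<close> \<open>g \<in> mspace (F x)\<close> rep \<eta>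
  proof (rule uconv_tau_if_tubes_in)
    fix W and \<epsilon> :: real assume "W \<in> \<mu>" "\<epsilon> > 0"
    show "tube F W b \<epsilon> \<in> \<eta>"
      using ultrafilter_on_mono[OF \<eta> escape[rule_format, OF \<open>W \<in> \<mu>\<close> \<open>\<epsilon> > 0\<close>] Diff_subset
        tube_subset_total_space[OF ultrafilter_on_subset[OF \<mu> \<open>W \<in> \<mu>\<close>]]] .
  qed
  then have "C \<in> \<eta>"
    using \<open>openin \<tau> C\<close> \<open>(x, g) \<in> C\<close> by (simp add: uconv_def)
  then show False
    using ultrafilter_on_disjoint[OF \<eta> \<open>C \<in> \<eta>\<close> escape[rule_format, OF ultrafilter_on_space[OF \<mu>] zero_less_one]]
    by blast
qed

theorem theorem3p2:
  fixes X :: "'x topology" and F :: "'x \<Rightarrow> 'a metric" and k :: real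
    and \<sigma> :: "'x set \<Rightarrow> ('x \<Rightarrow> 'x) \<Rightarrow> 'x set set \<Rightarrow> 'a \<Rightarrow> 'x \<Rightarrow> 'a"
    and \<tau> :: "('x \<times> 'a) topology" and C :: "('x \<times> 'a) set"
  assumes "compact_space X" and "Hausdorff_space X"
    and "left_ultrafunctor k X F \<sigma>"
    and "is_tau X F \<sigma> \<tau>"
    and "C \<subseteq> total_space X F"
  shows "openin \<tau> C \<longleftrightarrow>
    (\<forall>\<mu> x g b. ultrafilter_on (topspace X) \<mu> \<longrightarrow> uconv X \<mu> x \<longrightarrow> x \<in> fst ` C \<longrightarrow>
       g \<in> {a. (x, a) \<in> C} \<longrightarrow>
       is_rep (topspace X) \<mu> F (\<sigma> (topspace X) id \<mu> g) b \<longrightarrow>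
       (\<exists>W\<in>\<mu>. \<exists>\<epsilon>>0. \<forall>y\<in>W. mball_of (F y) (b y) \<epsilon> \<subseteq> {a. (y, a) \<in> C}))"
  unfolding tube_subset_iff[symmetric]
proof (intro iffI allI impI)
  fix \<mu> x g b
  assume "openin \<tau> C" "ultrafilter_on (topspace X) \<mu>" "uconv X \<mu> x" "x \<in> fst ` C"
    "g \<in> {a. (x, a) \<in> C}" "is_rep (topspace X) \<mu> F (\<sigma> (topspace X) id \<mu> g) b"
  then show "\<exists>W\<in>\<mu>. \<exists>\<epsilon>>0. tube F W b \<epsilon> \<subseteq> C"
    by (intro openin_tau_imp_tubes[OF assms(2-4)]) simp_all
next
  assume tubes: "\<forall>\<mu> x g b. ultrafilter_on (topspace X) \<mu> \<longrightarrow> uconv X \<mu> x \<longrightarrow> x \<in> fst ` C \<longrightarrow>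
    g \<in> {a. (x, a) \<in> C} \<longrightarrow> is_rep (topspace X) \<mu> F (\<sigma> (topspace X) id \<mu> g) b \<longrightarrow>
    (\<exists>W\<in>\<mu>. \<exists>\<epsilon>>0. tube F W b \<epsilon> \<subseteq> C)"
  show "openin \<tau> C"
  proof (rule openin_tau_if_tubes[OF assms(2-5)])
    fix \<mu> x g assume \<mu>: "ultrafilter_on (topspace X) \<mu>" and "uconv X \<mu> x" and "(x, g) \<in> C"
    then have "x \<in> fst ` C" and "g \<in> {a. (x, a) \<in> C}" and "g \<in> mspace (F x)"
      using assms(5) by (force simp: total_space_def)+
    then have "is_rep (topspace X) \<mu> F (\<sigma> (topspace X) id \<mu> g) (\<sigma> (topspace X) id \<mu> g)"
      using is_rep_refl[OF \<mu> left_ultrafunctor_sigma_id[OF assms(3,2) \<mu> \<open>uconv X \<mu> x\<close>]] by blast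
    then show "\<exists>W\<in>\<mu>. \<exists>\<epsilon>>0. tube F W (\<sigma> (topspace X) id \<mu> g) \<epsilon> \<subseteq> C"
      by (rule tubes[rule_format, OF \<mu> \<open>uconv X \<mu> x\<close> \<open>x \<in> fst ` C\<close> \<open>g \<in> {a. (x, a) \<in> C}\<close>])
  qed
qed

end
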